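(* Let $R$ be an Armendariz ring. Then the polynomial ring $R[x]$ is a generalized right Baer ring if and only if $R$ is a generalized right Baer ring.
   Context: All rings are associative with identity. For a nonempty subset $X$ of a ring $R$, $r_R(X)=\{a\in R : xa=0 \text{ for all } x\in X\}$, and for a positive integer $n$, $X^n$ denotes the set of all products $a_1\cdots a_n$ with $a_i\in X$. A ring $R$ is generalized right Baer if for every nonempty subset $X$ of $R$ there exist a positive integer $n$ (depending on $X$) and an idempotent $e\in R$ with $r_R(X^n)=eR$. A ring $R$ is Armendariz if whenever polynomials $f(x)=\sum_{i=0}^m a_ix^i$ and $g(x)=\sum_{j=0}^n b_jx^j$ in $R[x]$ satisfy $f(x)g(x)=0$, then $a_ib_j=0$ for all $i,j$. *)

theory Defs
  imports "HOL-Algebra.UnivPoly"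
begin

definition r_ann :: "('a, 'm) ring_scheme \<Rightarrow> 'a set \<Rightarrow> 'a set" where
  "r_ann R X = {a \<in> carrier R. \<forall>x\<in>X. x \<otimes>\<^bsub>R\<^esub> a = \<zero>\<^bsub>R\<^esub>}"

text \<open>X^n: all products a_1 \<dots> a_n with a_i in X (intended for n \<ge> 1).\<close>
definition set_pow :: "('a, 'm) ring_scheme \<Rightarrow> 'a set \<Rightarrow> nat \<Rightarrow> 'a set" where
  "set_pow R X n = {foldr (\<lambda>a b. a \<otimes>\<^bsub>R\<^esub> b) xs \<one>\<^bsub>R\<^esub> | xs. length xs = n \<and> set xs \<subseteq> X}"

definition gen_right_baer :: "('a, 'm) ring_scheme \<Rightarrow> bool" where
  "gen_right_baer R \<longleftrightarrow>
     (\<forall>X. X \<subseteq> carrier R \<and> X \<noteq> {} \<longrightarrow>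
        (\<exists>n::nat. n > 0 \<and> (\<exists>e\<in>carrier R. e \<otimes>\<^bsub>R\<^esub> e = e \<and>
            r_ann R (set_pow R X n) = {e \<otimes>\<^bsub>R\<^esub> a | a. a \<in> carrier R})))"

definition armendariz :: "('a, 'm) ring_scheme \<Rightarrow> bool" where
  "armendariz R \<longleftrightarrow>
     (\<forall>f\<in>carrier (UP R). \<forall>g\<in>carrier (UP R).
        f \<otimes>\<^bsub>UP R\<^esub> g = \<zero>\<^bsub>UP R\<^esub> \<longrightarrow>
        (\<forall>i j. coeff (UP R) f i \<otimes>\<^bsub>R\<^esub> coeff (UP R) g j = \<zero>\<^bsub>R\<^esub>))"

end

(* Over an Armendariz ring, a product f_1 \<cdots> f_n g of polynomials vanishes iff every
   product a_1 \<cdots> a_n b vanishes, where a_i ranges over the coefficients of f_i and b over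
   those of g. So if C is the set of coefficients of the polynomials in Y, then r(Y^n) in R[x]
   consists of the polynomials with all coefficients in r(C^n), and r(C^n) = eR gives
   r(Y^n) = eR[x]. Conversely, for constant polynomials r(S^n) in R[x] is r(S^n)[x], so
   r(S^n)[x] = E R[x] forces r(S^n) = E(0) R; this direction needs no Armendariz hypothesis. *)
theory Submission
  imports Defs "HOL-Algebra.Divisibility"
begin

lemma (in ring) r_ann_mult_closed:
  assumes "S \<subseteq> carrier R" and "x \<in> r_ann R S" and "a \<in> carrier R"
  shows "x \<otimes> a \<in> r_ann R S"
  using assms by (auto simp: r_ann_def m_assoc[symmetric] subsetD)

lemma (in ring) zero_in_r_ann: "S \<subseteq> carrier R \<Longrightarrow> \<zero> \<in> r_ann R S"
  by (auto simp: r_ann_def subsetD)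

context UP_ring
begin

lemma smult_eq_zero_iff:
  "c \<in> carrier R \<Longrightarrow> p \<in> carrier P \<Longrightarrow> c \<odot>\<^bsub>P\<^esub> p = \<zero>\<^bsub>P\<^esub> \<longleftrightarrow> (\<forall>n. c \<otimes> coeff P p n = \<zero>)"
proof
  assume "c \<in> carrier R" "p \<in> carrier P" "c \<odot>\<^bsub>P\<^esub> p = \<zero>\<^bsub>P\<^esub>"
  then show "\<forall>n. c \<otimes> coeff P p n = \<zero>"
    by (metis coeff_smult coeff_zero)
qed (auto intro: up_eqI)

lemma armendariz_mult_eq_zero_iff:
  assumes "armendariz R" and p: "p \<in> carrier P" and q: "q \<in> carrier P"
  shows "p \<otimes>\<^bsub>P\<^esub> q = \<zero>\<^bsub>P\<^esub> \<longleftrightarrow> (\<forall>i j. coeff P p i \<otimes> coeff P q j = \<zero>)"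
proof
  assume "p \<otimes>\<^bsub>P\<^esub> q = \<zero>\<^bsub>P\<^esub>"
  then show "\<forall>i j. coeff P p i \<otimes> coeff P q j = \<zero>"
    using assms unfolding armendariz_def P_def by blast
next
  assume zero: "\<forall>i j. coeff P p i \<otimes> coeff P q j = \<zero>"
  show "p \<otimes>\<^bsub>P\<^esub> q = \<zero>\<^bsub>P\<^esub>"
  proof (rule up_eqI)
    fix n
    have "coeff P (p \<otimes>\<^bsub>P\<^esub> q) n = (\<Oplus>i \<in> {..n}. \<zero>)"
      using p q zero by (auto intro: R.finsum_cong')
    then show "coeff P (p \<otimes>\<^bsub>P\<^esub> q) n = coeff P \<zero>\<^bsub>P\<^esub> n" by simp
  qed (use p q in auto)
qed

abbreviation coeff_choice :: "'a list \<Rightarrow> (nat \<Rightarrow> 'a) list \<Rightarrow> bool" where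
  "coeff_choice as fs \<equiv> list_all2 (\<lambda>a f. a \<in> range (coeff P f)) as fs"

lemma coeff_choice_carrier:
  "coeff_choice as fs \<Longrightarrow> set fs \<subseteq> carrier P \<Longrightarrow> set as \<subseteq> carrier R"
  by (induction rule: list_all2_induct) auto

lemma subset_coeffs_iff_coeff_choice:
  "set as \<subseteq> (\<Union>f\<in>Y. range (coeff P f)) \<longleftrightarrow> (\<exists>fs. set fs \<subseteq> Y \<and> coeff_choice as fs)"
proof (induction as)
  case (Cons a as)
  show ?case
  proof
    assume "set (a # as) \<subseteq> (\<Union>f\<in>Y. range (coeff P f))"
    then obtain f fs where "f \<in> Y" "a \<in> range (coeff P f)" "set fs \<subseteq> Y" "coeff_choice as fs"
      using Cons.IH by auto
    then show "\<exists>fs. set fs \<subseteq> Y \<and> coeff_choice (a # as) fs"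
      by (intro exI[of _ "f # fs"]) auto
  next
    assume "\<exists>fs. set fs \<subseteq> Y \<and> coeff_choice (a # as) fs"
    then show "set (a # as) \<subseteq> (\<Union>f\<in>Y. range (coeff P f))"
      using Cons.IH by (auto simp: list_all2_Cons1)
  qed
qed simp

(* The scalar c accumulates the coefficients already chosen; it is what makes the
   induction over the factors go through. *)
lemma armendariz_prod_smult_eq_zero_iff:
  assumes A: "armendariz R" and g: "g \<in> carrier P"
  shows "set fs \<subseteq> carrier P \<Longrightarrow> c \<in> carrier R \<Longrightarrow>
    c \<odot>\<^bsub>P\<^esub> (foldr (\<otimes>\<^bsub>P\<^esub>) fs \<one>\<^bsub>P\<^esub> \<otimes>\<^bsub>P\<^esub> g) = \<zero>\<^bsub>P\<^esub> \<longleftrightarrow>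
    (\<forall>as. coeff_choice as fs \<longrightarrow> (\<forall>j. c \<otimes> foldr (\<otimes>) as \<one> \<otimes> coeff P g j = \<zero>))"
proof (induction fs arbitrary: c)
  case Nil
  then show ?case using g by (simp add: smult_eq_zero_iff R.m_assoc)
next
  case (Cons f fs)
  then have f: "f \<in> carrier P" and fs: "set fs \<subseteq> carrier P" and c: "c \<in> carrier R" by auto
  define h where "h = foldr (\<otimes>\<^bsub>P\<^esub>) fs \<one>\<^bsub>P\<^esub> \<otimes>\<^bsub>P\<^esub> g"
  have h: "h \<in> carrier P" using fs g unfolding h_def by (simp add: P.multlist_closed)
  have "c \<odot>\<^bsub>P\<^esub> (foldr (\<otimes>\<^bsub>P\<^esub>) (f # fs) \<one>\<^bsub>P\<^esub> \<otimes>\<^bsub>P\<^esub> g) = (c \<odot>\<^bsub>P\<^esub> f) \<otimes>\<^bsub>P\<^esub> h"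
    using c f fs g by (simp add: h_def UP_smult_assoc2 P.m_assoc)
  then have "c \<odot>\<^bsub>P\<^esub> (foldr (\<otimes>\<^bsub>P\<^esub>) (f # fs) \<one>\<^bsub>P\<^esub> \<otimes>\<^bsub>P\<^esub> g) = \<zero>\<^bsub>P\<^esub> \<longleftrightarrow>
      (\<forall>i k. (c \<otimes> coeff P f i) \<otimes> coeff P h k = \<zero>)"
    using armendariz_mult_eq_zero_iff[OF A _ h, of "c \<odot>\<^bsub>P\<^esub> f"] c f by simp
  also have "\<dots> \<longleftrightarrow> (\<forall>i. (c \<otimes> coeff P f i) \<odot>\<^bsub>P\<^esub> h = \<zero>\<^bsub>P\<^esub>)"
    using c f h by (simp add: smult_eq_zero_iff)
  also have "\<dots> \<longleftrightarrow> (\<forall>i as. coeff_choice as fs \<longrightarrow>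
      (\<forall>j. (c \<otimes> coeff P f i) \<otimes> foldr (\<otimes>) as \<one> \<otimes> coeff P g j = \<zero>))"
    using Cons.IH[OF fs] c f unfolding h_def by simp
  also have "\<dots> \<longleftrightarrow> (\<forall>as. coeff_choice as (f # fs) \<longrightarrow>
      (\<forall>j. c \<otimes> foldr (\<otimes>) as \<one> \<otimes> coeff P g j = \<zero>))"
  proof -
    have assoc: "(c \<otimes> coeff P f i) \<otimes> foldr (\<otimes>) as \<one> = c \<otimes> foldr (\<otimes>) (coeff P f i # as) \<one>"
      if "coeff_choice as fs" for i as
      using coeff_choice_carrier[OF that fs] c f by (simp add: R.m_assoc)
    show ?thesis
    proof (intro iffI allI impI)
      fix as j
      assume "\<forall>i as. coeff_choice as fs \<longrightarrow>
          (\<forall>j. (c \<otimes> coeff P f i) \<otimes> foldr (\<otimes>) as \<one> \<otimes> coeff P g j = \<zero>)"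
        and "coeff_choice as (f # fs)"
      then show "c \<otimes> foldr (\<otimes>) as \<one> \<otimes> coeff P g j = \<zero>"
        by (auto simp: list_all2_Cons2 assoc)
    next
      fix i as j
      assume "\<forall>as. coeff_choice as (f # fs) \<longrightarrow> (\<forall>j. c \<otimes> foldr (\<otimes>) as \<one> \<otimes> coeff P g j = \<zero>)"
        and choice: "coeff_choice as fs"
      moreover have "coeff_choice (coeff P f i # as) (f # fs)" using choice by simp
      ultimately have "c \<otimes> foldr (\<otimes>) (coeff P f i # as) \<one> \<otimes> coeff P g j = \<zero>" by blast
      then show "(c \<otimes> coeff P f i) \<otimes> foldr (\<otimes>) as \<one> \<otimes> coeff P g j = \<zero>"
        by (simp add: assoc[OF choice])
    qed
  qed
  finally show ?case .
qed

lemma armendariz_prod_mult_eq_zero_iff: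
  assumes "armendariz R" and "set fs \<subseteq> carrier P" and "g \<in> carrier P"
  shows "foldr (\<otimes>\<^bsub>P\<^esub>) fs \<one>\<^bsub>P\<^esub> \<otimes>\<^bsub>P\<^esub> g = \<zero>\<^bsub>P\<^esub> \<longleftrightarrow>
    (\<forall>as. coeff_choice as fs \<longrightarrow> (\<forall>j. foldr (\<otimes>) as \<one> \<otimes> coeff P g j = \<zero>))"
  using armendariz_prod_smult_eq_zero_iff[OF assms(1,3,2) R.one_closed] assms(2,3)
    coeff_choice_carrier[OF _ assms(2)] by (simp add: P.multlist_closed R.multlist_closed)

lemma r_ann_set_pow_UP:
  assumes A: "armendariz R" and Y: "Y \<subseteq> carrier P"
  shows "r_ann P (set_pow P Y n) =
    {g \<in> carrier P. \<forall>j. coeff P g j \<in> r_ann R (set_pow R (\<Union>f\<in>Y. range (coeff P f)) n)}"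
proof -
  let ?C = "\<Union>f\<in>Y. range (coeff P f)"
  have "g \<in> r_ann P (set_pow P Y n) \<longleftrightarrow> (\<forall>j. coeff P g j \<in> r_ann R (set_pow R ?C n))"
    if g: "g \<in> carrier P" for g
  proof -
    have "g \<in> r_ann P (set_pow P Y n) \<longleftrightarrow>
        (\<forall>fs. length fs = n \<and> set fs \<subseteq> Y \<longrightarrow> foldr (\<otimes>\<^bsub>P\<^esub>) fs \<one>\<^bsub>P\<^esub> \<otimes>\<^bsub>P\<^esub> g = \<zero>\<^bsub>P\<^esub>)"
      using g unfolding r_ann_def set_pow_def by auto
    also have "\<dots> \<longleftrightarrow> (\<forall>fs as. length fs = n \<and> set fs \<subseteq> Y \<and> coeff_choice as fs \<longrightarrow>
        (\<forall>j. foldr (\<otimes>) as \<one> \<otimes> coeff P g j = \<zero>))"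
    proof -
      have "foldr (\<otimes>\<^bsub>P\<^esub>) fs \<one>\<^bsub>P\<^esub> \<otimes>\<^bsub>P\<^esub> g = \<zero>\<^bsub>P\<^esub> \<longleftrightarrow>
          (\<forall>as. coeff_choice as fs \<longrightarrow> (\<forall>j. foldr (\<otimes>) as \<one> \<otimes> coeff P g j = \<zero>))"
        if "set fs \<subseteq> Y" for fs
        using that Y by (intro armendariz_prod_mult_eq_zero_iff[OF A _ g]) auto
      then show ?thesis by auto
    qed
    also have "\<dots> \<longleftrightarrow> (\<forall>as. length as = n \<and> set as \<subseteq> ?C \<longrightarrow>
        (\<forall>j. foldr (\<otimes>) as \<one> \<otimes> coeff P g j = \<zero>))"
      using subset_coeffs_iff_coeff_choice by (metis list_all2_lengthD)
    also have "\<dots> \<longleftrightarrow> (\<forall>j. coeff P g j \<in> r_ann R (set_pow R ?C n))"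
      using g unfolding r_ann_def set_pow_def by auto
    finally show ?thesis .
  qed
  moreover have "r_ann P (set_pow P Y n) \<subseteq> carrier P"
    unfolding r_ann_def by auto
  ultimately show ?thesis by blast
qed

lemma coeffwise_idem_ideal_eq:
  assumes e: "e \<in> carrier R" and idem: "e \<otimes> e = e"
  shows "{g \<in> carrier P. \<forall>j. coeff P g j \<in> {e \<otimes> a | a. a \<in> carrier R}} =
    {monom P e 0 \<otimes>\<^bsub>P\<^esub> h | h. h \<in> carrier P}"
proof (intro equalityI subsetI)
  fix g
  assume "g \<in> {g \<in> carrier P. \<forall>j. coeff P g j \<in> {e \<otimes> a | a. a \<in> carrier R}}"
  then have g: "g \<in> carrier P" and coeffs: "\<forall>j. \<exists>a\<in>carrier R. coeff P g j = e \<otimes> a" by auto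
  have "e \<otimes> coeff P g j = coeff P g j" for j
    using coeffs e by (metis R.m_assoc idem)
  then have "monom P e 0 \<otimes>\<^bsub>P\<^esub> g = g"
    using e g by (intro up_eqI) (simp_all add: monom_mult_is_smult)
  then show "g \<in> {monom P e 0 \<otimes>\<^bsub>P\<^esub> h | h. h \<in> carrier P}" using g by force
next
  fix g
  assume "g \<in> {monom P e 0 \<otimes>\<^bsub>P\<^esub> h | h. h \<in> carrier P}"
  then obtain h where "h \<in> carrier P" "g = e \<odot>\<^bsub>P\<^esub> h"
    using e by (auto simp: monom_mult_is_smult)
  then show "g \<in> {g \<in> carrier P. \<forall>j. coeff P g j \<in> {e \<otimes> a | a. a \<in> carrier R}}"
    using e by auto
qed

lemma gen_right_baer_UP:
  assumes A: "armendariz R" and baer: "gen_right_baer R"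
  shows "gen_right_baer P"
  unfolding gen_right_baer_def
proof (intro allI impI)
  fix Y assume Y: "Y \<subseteq> carrier P \<and> Y \<noteq> {}"
  let ?C = "\<Union>f\<in>Y. range (coeff P f)"
  have "?C \<subseteq> carrier R \<and> ?C \<noteq> {}" using Y by auto
  then obtain n e where n: "n > 0" and e: "e \<in> carrier R" "e \<otimes> e = e"
    and ann: "r_ann R (set_pow R ?C n) = {e \<otimes> a | a. a \<in> carrier R}"
    using baer[unfolded gen_right_baer_def, rule_format, of ?C] by blast
  have "r_ann P (set_pow P Y n) =
      {g \<in> carrier P. \<forall>j. coeff P g j \<in> {e \<otimes> a | a. a \<in> carrier R}}"
    using r_ann_set_pow_UP[OF A, of Y n] Y ann by simp
  also have "\<dots> = {monom P e 0 \<otimes>\<^bsub>P\<^esub> h | h. h \<in> carrier P}"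
    by (rule coeffwise_idem_ideal_eq[OF e])
  finally have "r_ann P (set_pow P Y n) = {monom P e 0 \<otimes>\<^bsub>P\<^esub> h | h. h \<in> carrier P}" .
  moreover have "monom P e 0 \<otimes>\<^bsub>P\<^esub> monom P e 0 = monom P e 0"
    using monom_mult[OF e(1) e(1), of 0 0] e(2) by simp
  moreover have "monom P e 0 \<in> carrier P" using e by simp
  ultimately show "\<exists>n>0. \<exists>E\<in>carrier P. E \<otimes>\<^bsub>P\<^esub> E = E \<and>
      r_ann P (set_pow P Y n) = {E \<otimes>\<^bsub>P\<^esub> h | h. h \<in> carrier P}"
    using n by blast
qed

lemma foldr_monom_const:
  "set xs \<subseteq> carrier R \<Longrightarrow>
    foldr (\<otimes>\<^bsub>P\<^esub>) (map (\<lambda>x. monom P x 0) xs) \<one>\<^bsub>P\<^esub> = monom P (foldr (\<otimes>) xs \<one>) 0"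
proof (induction xs)
  case (Cons x xs)
  then show ?case using monom_mult[of x "foldr (\<otimes>) xs \<one>" 0 0] by (simp add: R.multlist_closed)
qed simp

lemma set_pow_const:
  assumes X: "X \<subseteq> carrier R"
  shows "set_pow P ((\<lambda>x. monom P x 0) ` X) n = (\<lambda>w. monom P w 0) ` set_pow R X n"
proof (intro equalityI subsetI)
  fix y assume "y \<in> set_pow P ((\<lambda>x. monom P x 0) ` X) n"
  then obtain fs where y: "y = foldr (\<otimes>\<^bsub>P\<^esub>) fs \<one>\<^bsub>P\<^esub>" "length fs = n"
    and "fs \<in> lists ((\<lambda>x. monom P x 0) ` X)"
    unfolding set_pow_def by auto
  then obtain xs where "fs = map (\<lambda>x. monom P x 0) xs" "set xs \<subseteq> X"
    by (auto simp: lists_image)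
  then show "y \<in> (\<lambda>w. monom P w 0) ` set_pow R X n"
    using X y unfolding set_pow_def by (auto simp: foldr_monom_const)
next
  fix y assume "y \<in> (\<lambda>w. monom P w 0) ` set_pow R X n"
  then obtain xs where xs: "length xs = n" "set xs \<subseteq> X"
    and "y = monom P (foldr (\<otimes>) xs \<one>) 0"
    unfolding set_pow_def by auto
  then have "y = foldr (\<otimes>\<^bsub>P\<^esub>) (map (\<lambda>x. monom P x 0) xs) \<one>\<^bsub>P\<^esub>"
    using X by (simp add: foldr_monom_const)
  then show "y \<in> set_pow P ((\<lambda>x. monom P x 0) ` X) n"
    unfolding set_pow_def using xs by (fastforce intro!: exI[of _ "map (\<lambda>x. monom P x 0) xs"])
qed

lemma r_ann_const:
  assumes S: "S \<subseteq> carrier R"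
  shows "r_ann P ((\<lambda>s. monom P s 0) ` S) = {g \<in> carrier P. \<forall>j. coeff P g j \<in> r_ann R S}"
  using S by (auto simp: r_ann_def monom_mult_is_smult smult_eq_zero_iff subsetD)

lemma r_ann_principal_of_r_ann_const:
  assumes S: "S \<subseteq> carrier R" and E: "E \<in> carrier P"
    and ann: "r_ann P ((\<lambda>s. monom P s 0) ` S) = {E \<otimes>\<^bsub>P\<^esub> h | h. h \<in> carrier P}"
  shows "r_ann R S = {coeff P E 0 \<otimes> a | a. a \<in> carrier R}"
proof (intro equalityI subsetI)
  fix b assume b: "b \<in> r_ann R S"
  then have "b \<in> carrier R" by (simp add: r_ann_def)
  then have "monom P b 0 \<in> r_ann P ((\<lambda>s. monom P s 0) ` S)"
    using b R.zero_in_r_ann[OF S] by (simp add: r_ann_const[OF S])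
  then obtain h where h: "h \<in> carrier P" "monom P b 0 = E \<otimes>\<^bsub>P\<^esub> h"
    using ann by auto
  have "b = coeff P (monom P b 0) 0" using \<open>b \<in> carrier R\<close> by simp
  also have "\<dots> = coeff P E 0 \<otimes> coeff P h 0" using h E by simp
  finally show "b \<in> {coeff P E 0 \<otimes> a | a. a \<in> carrier R}" using h(1) by auto
next
  fix b assume "b \<in> {coeff P E 0 \<otimes> a | a. a \<in> carrier R}"
  then obtain a where a: "a \<in> carrier R" "b = coeff P E 0 \<otimes> a" by auto
  have "E \<in> r_ann P ((\<lambda>s. monom P s 0) ` S)"
    using E ann by (auto intro!: exI[of _ "\<one>\<^bsub>P\<^esub>"])
  then have "coeff P E 0 \<in> r_ann R S" by (simp add: r_ann_const[OF S])
  then show "b \<in> r_ann R S" using R.r_ann_mult_closed[OF S _ a(1)] a(2) by simp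
qed

lemma gen_right_baer_of_UP:
  assumes baer: "gen_right_baer P"
  shows "gen_right_baer R"
  unfolding gen_right_baer_def
proof (intro allI impI)
  fix X assume X: "X \<subseteq> carrier R \<and> X \<noteq> {}"
  let ?Y = "(\<lambda>x. monom P x 0) ` X"
  have "?Y \<subseteq> carrier P \<and> ?Y \<noteq> {}" using X by auto
  then obtain n E where n: "n > 0" and E: "E \<in> carrier P" "E \<otimes>\<^bsub>P\<^esub> E = E"
    and ann: "r_ann P (set_pow P ?Y n) = {E \<otimes>\<^bsub>P\<^esub> h | h. h \<in> carrier P}"
    using baer[unfolded gen_right_baer_def, rule_format, of ?Y] by blast
  have S: "set_pow R X n \<subseteq> carrier R"
    using X unfolding set_pow_def by (auto simp: R.multlist_closed)
  have "coeff P E 0 \<otimes> coeff P E 0 = coeff P (E \<otimes>\<^bsub>P\<^esub> E) 0"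
    using E(1) by simp
  then have "coeff P E 0 \<otimes> coeff P E 0 = coeff P E 0" by (simp only: E(2))
  moreover have "r_ann R (set_pow R X n) = {coeff P E 0 \<otimes> a | a. a \<in> carrier R}"
    using ann X by (intro r_ann_principal_of_r_ann_const[OF S E(1)]) (simp add: set_pow_const)
  moreover have "coeff P E 0 \<in> carrier R" using E by simp
  ultimately show "\<exists>n>0. \<exists>e\<in>carrier R. e \<otimes> e = e \<and>
      r_ann R (set_pow R X n) = {e \<otimes> a | a. a \<in> carrier R}"
    using n by blast
qed

end

theorem corollary3p12:
  fixes R :: "('a, 'm) ring_scheme"
  assumes "ring R" and "armendariz R"
  shows "gen_right_baer (UP R) \<longleftrightarrow> gen_right_baer R"
proof -
  interpret UP_ring R "UP R" by (simp add: UP_ring_def assms(1))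
  show ?thesis using gen_right_baer_UP[OF assms(2)] gen_right_baer_of_UP by blast
qed

end
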